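(* Let $n\ge 3$ and let $q$ be a real number with $0<q\le 1/6$. Consider the Markov chain on $\{0,1,\dots,n-1\}$ with $n\times n$ transition probability matrix $\mathbf P(q)=(P_{ij})$ given by: $P_{00}=1-q$, $P_{01}=q$; $P_{10}=5q$, $P_{11}=1-6q$, $P_{12}=q$; for $2\le i\le n-2$: $P_{i0}=4q$, $P_{i,i-1}=q$, $P_{ii}=1-6q$, $P_{i,i+1}=q$; $P_{n-1,0}=2q$, $P_{n-1,n-2}=q$, $P_{n-1,n-1}=1-3q$; all other entries $0$. Then the steady state probability vector $\vec\pi=(\pi_0,\dots,\pi_{n-1})$ (the unique probability vector with $\vec\pi=\vec\pi\mathbf P(q)$) is given by $$\pi_i=\frac{C_{n-1-i}}{\sum_{l=0}^{n-1}C_l},\qquad i=0,1,\dots,n-1.$$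
   Context: The Lucas-balancing numbers $C_m$ are defined by $C_0=1$, $C_1=3$, $C_{m+1}=6C_m-C_{m-1}$ (equivalently $C_m=\sqrt{8B_m^2+1}$ with $B_m$ the balancing numbers $B_0=0,B_1=1,B_{m+1}=6B_m-B_{m-1}$). *)

theory Defs
  imports Main "HOL.Real"
begin

fun lucas_bal :: "nat \<Rightarrow> int" where
  "lucas_bal 0 = 1"
| "lucas_bal (Suc 0) = 3"
| "lucas_bal (Suc (Suc m)) = 6 * lucas_bal (Suc m) - lucas_bal m"

definition trans_P :: "nat \<Rightarrow> real \<Rightarrow> nat \<Rightarrow> nat \<Rightarrow> real" where
  "trans_P n q i j =
    (if i = 0 then (if j = 0 then 1 - q else if j = 1 then q else 0)
     else if i = 1 then (if j = 0 then 5 * q else if j = 1 then 1 - 6 * q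
                         else if j = 2 then q else 0)
     else if i \<le> n - 2 then (if j = 0 then 4 * q else if j = i - 1 then q
                         else if j = i then 1 - 6 * q else if j = i + 1 then q else 0)
     else if i = n - 1 then (if j = 0 then 2 * q else if j = n - 2 then q
                         else if j = n - 1 then 1 - 3 * q else 0)
     else 0)"

definition stationary_prob :: "nat \<Rightarrow> real \<Rightarrow> (nat \<Rightarrow> real) \<Rightarrow> bool" where
  "stationary_prob n q \<pi> \<longleftrightarrow>
     (\<forall>i<n. 0 \<le> \<pi> i) \<and> (\<Sum>i<n. \<pi> i) = 1 \<and>
     (\<forall>j<n. \<pi> j = (\<Sum>i<n. \<pi> i * trans_P n q i j))"

end

theory Submission
  imports Defs
begin

text \<open>Read the stationary vector backwards, \<open>c k = \<pi> (n - 1 - k)\<close>. The balance equation at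
  state \<open>n - 1\<close> says \<open>c 1 = 3 c 0\<close> and the one at an interior state says
  \<open>c (k + 2) = 6 c (k + 1) - c k\<close>, so the balance equations at the states \<open>1, \<dots>, n - 1\<close> hold
  exactly when \<open>c\<close> is a multiple of the Lucas-balancing sequence. The remaining equation, at
  state 0, is then automatic because \<open>P(q)\<close> is row-stochastic, and normalisation fixes the
  multiple.\<close>

lemma lucas_bal_pos: "0 < lucas_bal m"
proof -
  have "1 \<le> lucas_bal m \<and> lucas_bal m \<le> lucas_bal (Suc m)"
    by (induction m) auto
  then show ?thesis by simp
qed

lemma lucas_bal_recurrence_unique:
  fixes c :: "nat \<Rightarrow> 'a::comm_ring_1"
  assumes start: "c 1 = 3 * c 0"
    and rec: "\<And>k. k + 2 < N \<Longrightarrow> c (k + 2) = 6 * c (k + 1) - c k"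
  shows "k < N \<Longrightarrow> c k = of_int (lucas_bal k) * c 0"
proof (induction k rule: lucas_bal.induct)
  case (3 m)
  then have "c (Suc (Suc m)) = 6 * c (Suc m) - c m" using rec[of m] by simp
  with 3 show ?case by (simp add: algebra_simps)
qed (use start in simp_all)

lemma lucas_bal_sum_pos: "0 < n \<Longrightarrow> 0 < (\<Sum>l<n. real_of_int (lucas_bal l))"
  using lucas_bal_pos by (intro sum_pos) auto

lemma lucas_bal_reversed_sum:
  "(\<Sum>i<n. real_of_int (lucas_bal (n - 1 - i)) * x) = (\<Sum>l<n. real_of_int (lucas_bal l)) * x"
  unfolding sum_distrib_right[symmetric]
  using sum.nat_diff_reindex[of "\<lambda>l. real_of_int (lucas_bal l)" n] by simp

lemma balance_eq_from_others:
  fixes P :: "'i \<Rightarrow> 'i \<Rightarrow> 'a::comm_ring_1"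
  assumes "finite I" "k \<in> I"
    and rows: "\<And>i. i \<in> I \<Longrightarrow> (\<Sum>j\<in>I. P i j) = 1"
    and balance: "\<And>j. j \<in> I \<Longrightarrow> j \<noteq> k \<Longrightarrow> \<pi> j = (\<Sum>i\<in>I. \<pi> i * P i j)"
  shows "\<pi> k = (\<Sum>i\<in>I. \<pi> i * P i k)"
proof -
  have "(\<Sum>j\<in>I. \<Sum>i\<in>I. \<pi> i * P i j) = (\<Sum>i\<in>I. \<pi> i * (\<Sum>j\<in>I. P i j))"
    by (subst sum.swap) (simp add: sum_distrib_left)
  also have "\<dots> = (\<Sum>j\<in>I. \<pi> j)"
    using rows by simp
  finally have "(\<Sum>j\<in>I. \<Sum>i\<in>I. \<pi> i * P i j) = (\<Sum>j\<in>I. \<pi> j)" .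
  moreover have "(\<Sum>j\<in>I - {k}. \<Sum>i\<in>I. \<pi> i * P i j) = (\<Sum>j\<in>I - {k}. \<pi> j)"
    using balance by (intro sum.cong) auto
  moreover have "(\<Sum>j\<in>I. f j) = f k + (\<Sum>j\<in>I - {k}. f j)" for f :: "'i \<Rightarrow> 'a"
    using assms(1,2) by (simp add: sum.remove)
  ultimately show ?thesis
    by (metis add_right_cancel)
qed

lemma trans_P_col:
  assumes "n \<ge> 3" "1 \<le> j" "j < n" "i < n"
  shows "trans_P n q i j =
    (if i + 1 = j \<or> i = j + 1 then q
     else if i = j then (if j + 1 = n then 1 - 3 * q else 1 - 6 * q) else 0)"
proof -
  consider "i = 0" | "i = 1" | "2 \<le> i" "i \<le> n - 2" | "i = n - 1"
    using assms by linarith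
  then show ?thesis
    by cases (use assms in \<open>auto simp: trans_P_def\<close>)
qed

lemma trans_P_col_interior:
  assumes "n \<ge> 3" "1 \<le> j" "j + 1 < n"
  shows "(\<Sum>i<n. \<pi> i * trans_P n q i j) = q * \<pi> (j - 1) + (1 - 6 * q) * \<pi> j + q * \<pi> (j + 1)"
proof -
  have "(\<Sum>i<n. \<pi> i * trans_P n q i j) = (\<Sum>i\<in>{j - 1, j, j + 1}. \<pi> i * trans_P n q i j)"
    using assms by (intro sum.mono_neutral_right) (auto simp: trans_P_col)
  also have "\<dots> = q * \<pi> (j - 1) + (1 - 6 * q) * \<pi> j + q * \<pi> (j + 1)"
  proof -
    obtain m where "j = Suc m" using assms(2) by (metis Suc_le_D One_nat_def)
    then show ?thesis using assms by (simp add: trans_P_col algebra_simps)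
  qed
  finally show ?thesis .
qed

lemma trans_P_col_last:
  assumes "n \<ge> 3"
  shows "(\<Sum>i<n. \<pi> i * trans_P n q i (n - 1)) = q * \<pi> (n - 2) + (1 - 3 * q) * \<pi> (n - 1)"
proof -
  have idx: "n - 2 \<noteq> n - 1" "n - 2 + 1 = n - 1" "1 \<le> n - 1"
    using assms by arith+
  have "(\<Sum>i<n. \<pi> i * trans_P n q i (n - 1)) = (\<Sum>i\<in>{n - 2, n - 1}. \<pi> i * trans_P n q i (n - 1))"
  proof (intro sum.mono_neutral_right)
    show "\<forall>i\<in>{..<n} - {n - 2, n - 1}. \<pi> i * trans_P n q i (n - 1) = 0"
    proof
      fix i assume "i \<in> {..<n} - {n - 2, n - 1}"
      then have "i < n" "i + 1 \<noteq> n - 1" "i \<noteq> n - 1" "i \<noteq> n" by auto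
      then show "\<pi> i * trans_P n q i (n - 1) = 0"
        using assms by (subst trans_P_col) auto
    qed
  qed (use assms in auto)
  also have "\<dots> = \<pi> (n - 2) * trans_P n q (n - 2) (n - 1) + \<pi> (n - 1) * trans_P n q (n - 1) (n - 1)"
    using idx by simp
  also have "\<dots> = q * \<pi> (n - 2) + (1 - 3 * q) * \<pi> (n - 1)"
    using assms idx by (auto simp: trans_P_col)
  finally show ?thesis .
qed

lemma trans_P_row_sum:
  assumes "n \<ge> 3" "i < n"
  shows "(\<Sum>j<n. trans_P n q i j) = 1"
proof -
  have split0: "(\<Sum>j<n. trans_P n q i j) = trans_P n q i 0 + (\<Sum>j\<in>{1..<n}. trans_P n q i j)"
    using assms sum.remove[of "{..<n}" 0 "trans_P n q i"] by (simp add: atLeast1_lessThan_eq_remove0)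
  consider "i = 0" | "i = 1" | "2 \<le> i" "i + 1 < n" | "i = n - 1"
    using assms by linarith
  then show ?thesis
  proof cases
    case 1
    have "(\<Sum>j\<in>{1..<n}. trans_P n q i j) = trans_P n q i 1"
      using assms 1 by (subst sum.mono_neutral_right[of _ "{1}"]) (auto simp: trans_P_col)
    then show ?thesis using split0 1 by (simp add: trans_P_def)
  next
    case 2
    have "(\<Sum>j\<in>{1..<n}. trans_P n q i j) = trans_P n q i 1 + trans_P n q i 2"
      using assms 2 by (subst sum.mono_neutral_right[of _ "{1, 2}"]) (auto simp: trans_P_col)
    then show ?thesis using split0 assms 2 by (simp add: trans_P_def)
  next
    case 3
    then obtain k where k: "i = Suc k"
      using not0_implies_Suc by fastforce
    have "(\<Sum>j\<in>{1..<n}. trans_P n q i j) = trans_P n q i k + trans_P n q i i + trans_P n q i (i + 1)"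
      using assms 3 k by (subst sum.mono_neutral_right[of _ "{k, i, i + 1}"]) (auto simp: trans_P_col)
    moreover have "trans_P n q i k = q" "trans_P n q i i = 1 - 6 * q" "trans_P n q i (i + 1) = q"
      using assms 3 k by (simp_all add: trans_P_col)
    moreover have "trans_P n q i 0 = 4 * q"
      using 3 by (auto simp: trans_P_def)
    ultimately show ?thesis using split0 by simp
  next
    case 4
    have idx: "n - 2 \<noteq> n - 1" "n - 2 + 1 = n - 1" "1 \<le> n - 2" "i \<noteq> 0" "i \<noteq> 1" "\<not> i \<le> n - 2"
      using assms 4 by arith+
    have "(\<Sum>j\<in>{1..<n}. trans_P n q i j) = trans_P n q i (n - 2) + trans_P n q i (n - 1)"
      using assms idx 4 by (subst sum.mono_neutral_right[of _ "{n - 2, n - 1}"]) (auto simp: trans_P_col)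
    moreover have "trans_P n q i (n - 2) = q" "trans_P n q i (n - 1) = 1 - 3 * q"
      using assms idx 4 by (auto simp: trans_P_col)
    moreover have "trans_P n q i 0 = 2 * q"
      using idx 4 by (simp add: trans_P_def)
    ultimately show ?thesis using split0 by simp
  qed
qed

definition rev_lucas_bal_multiple :: "nat \<Rightarrow> (nat \<Rightarrow> real) \<Rightarrow> bool" where
  "rev_lucas_bal_multiple n \<pi> \<longleftrightarrow> (\<exists>x. \<forall>i<n. \<pi> i = real_of_int (lucas_bal (n - 1 - i)) * x)"

lemma balance_off_state0_iff_rev_lucas_bal_multiple:
  fixes \<pi> :: "nat \<Rightarrow> real"
  assumes "n \<ge> 3" "q \<noteq> 0"
  shows "(\<forall>j. 1 \<le> j \<longrightarrow> j < n \<longrightarrow> \<pi> j = (\<Sum>i<n. \<pi> i * trans_P n q i j)) \<longleftrightarrow>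
         rev_lucas_bal_multiple n \<pi>"
proof
  assume balance: "\<forall>j. 1 \<le> j \<longrightarrow> j < n \<longrightarrow> \<pi> j = (\<Sum>i<n. \<pi> i * trans_P n q i j)"
  define c where "c k = \<pi> (n - 1 - k)" for k
  have "\<pi> (n - 1) = q * \<pi> (n - 2) + (1 - 3 * q) * \<pi> (n - 1)"
    using balance[rule_format, of "n - 1"] trans_P_col_last[OF assms(1), of \<pi> q] assms(1)
    by simp
  then have start: "c 1 = 3 * c 0"
    using assms(2) by (auto simp: c_def algebra_simps numeral_2_eq_2)
  have rec: "c (k + 2) = 6 * c (k + 1) - c k" if "k + 2 < n" for k
  proof -
    define j where "j = n - 1 - (k + 1)"
    have j: "1 \<le> j" "j + 1 < n" "j - 1 = n - 1 - (k + 2)" "j + 1 = n - 1 - k"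
      using that unfolding j_def by arith+
    have "\<pi> j = q * \<pi> (j - 1) + (1 - 6 * q) * \<pi> j + q * \<pi> (j + 1)"
      using balance[rule_format, of j] trans_P_col_interior[OF assms(1) j(1,2), of \<pi> q] j(1,2)
      by simp
    then have "q * \<pi> (j - 1) = q * (6 * \<pi> j - \<pi> (j + 1))"
      by (simp add: algebra_simps)
    then have "\<pi> (j - 1) = 6 * \<pi> j - \<pi> (j + 1)"
      using assms(2) by simp
    then show ?thesis
      using j by (simp add: c_def j_def)
  qed
  have "\<pi> i = lucas_bal (n - 1 - i) * \<pi> (n - 1)" if "i < n" for i
  proof -
    have "c (n - 1 - i) = lucas_bal (n - 1 - i) * c 0"
      using that by (intro lucas_bal_recurrence_unique[OF start rec]) auto
    with that show ?thesis
      by (simp add: c_def)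
  qed
  then show "rev_lucas_bal_multiple n \<pi>"
    unfolding rev_lucas_bal_multiple_def by blast
next
  assume "rev_lucas_bal_multiple n \<pi>"
  then obtain x where profile: "\<And>i. i < n \<Longrightarrow> \<pi> i = real_of_int (lucas_bal (n - 1 - i)) * x"
    unfolding rev_lucas_bal_multiple_def by blast
  show "\<forall>j. 1 \<le> j \<longrightarrow> j < n \<longrightarrow> \<pi> j = (\<Sum>i<n. \<pi> i * trans_P n q i j)"
  proof (intro allI impI)
    fix j assume j: "1 \<le> j" "j < n"
    show "\<pi> j = (\<Sum>i<n. \<pi> i * trans_P n q i j)"
    proof (cases "j + 1 < n")
      case True
      define k where "k = n - 2 - j"
      have "n - 1 - (j - 1) = Suc (Suc k)" "n - 1 - j = Suc k" "n - 1 - (j + 1) = k"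
        using j True unfolding k_def by arith+
      then have vals: "\<pi> (j - 1) = lucas_bal (Suc (Suc k)) * x" "\<pi> j = lucas_bal (Suc k) * x"
        "\<pi> (j + 1) = lucas_bal k * x"
        using profile j True by simp_all
      show ?thesis
        unfolding trans_P_col_interior[OF assms(1) j(1) True] vals by (simp add: algebra_simps)
    next
      case False
      then have "j = n - 1" using j by arith
      moreover have "\<pi> (n - 2) = 3 * x" "\<pi> (n - 1) = x"
        using profile assms(1) by (simp_all add: numeral_2_eq_2 Suc_diff_Suc)
      ultimately show ?thesis
        using trans_P_col_last[OF assms(1), of \<pi> q] by (simp add: algebra_simps)
    qed
  qed
qed

lemma stationary_prob_iff_rev_lucas_bal_multiple:
  fixes \<pi> :: "nat \<Rightarrow> real"
  assumes "n \<ge> 3" "q \<noteq> 0"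
  shows "stationary_prob n q \<pi> \<longleftrightarrow>
         rev_lucas_bal_multiple n \<pi> \<and> (\<Sum>i<n. \<pi> i) = 1"
proof
  assume "stationary_prob n q \<pi>"
  then have "\<forall>j<n. \<pi> j = (\<Sum>i<n. \<pi> i * trans_P n q i j)" "(\<Sum>i<n. \<pi> i) = 1"
    unfolding stationary_prob_def by blast+
  then show "rev_lucas_bal_multiple n \<pi> \<and> (\<Sum>i<n. \<pi> i) = 1"
    using balance_off_state0_iff_rev_lucas_bal_multiple[OF assms] by blast
next
  assume "rev_lucas_bal_multiple n \<pi> \<and> (\<Sum>i<n. \<pi> i) = 1"
  then obtain x where profile: "\<forall>i<n. \<pi> i = real_of_int (lucas_bal (n - 1 - i)) * x"
    and total: "(\<Sum>i<n. \<pi> i) = 1" unfolding rev_lucas_bal_multiple_def by blast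
  have "(\<Sum>l<n. real_of_int (lucas_bal l)) * x = 1"
    using total profile lucas_bal_reversed_sum[of n x] by simp
  then have "0 < x"
    using lucas_bal_sum_pos[of n] assms(1) zero_less_mult_iff[of "\<Sum>l<n. real_of_int (lucas_bal l)" x]
    by simp
  then have nonneg: "\<forall>i<n. 0 \<le> \<pi> i"
    using profile lucas_bal_pos by (metis mult_pos_pos of_int_0_less_iff order_less_imp_le)
  have off0: "\<forall>j. 1 \<le> j \<longrightarrow> j < n \<longrightarrow> \<pi> j = (\<Sum>i<n. \<pi> i * trans_P n q i j)"
    using balance_off_state0_iff_rev_lucas_bal_multiple[OF assms] profile
    unfolding rev_lucas_bal_multiple_def by blast
  have "\<pi> 0 = (\<Sum>i<n. \<pi> i * trans_P n q i 0)"
  proof (rule balance_eq_from_others)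
    show "(\<Sum>j<n. trans_P n q i j) = 1" if "i \<in> {..<n}" for i
      using trans_P_row_sum[OF assms(1)] that by simp
    show "\<pi> j = (\<Sum>i<n. \<pi> i * trans_P n q i j)" if "j \<in> {..<n}" "j \<noteq> 0" for j
      using off0 that by (metis lessThan_iff less_one linorder_not_le)
  qed (use assms(1) in auto)
  with off0 have "\<forall>j<n. \<pi> j = (\<Sum>i<n. \<pi> i * trans_P n q i j)"
    by (metis less_one linorder_not_le)
  with nonneg total show "stationary_prob n q \<pi>"
    unfolding stationary_prob_def by blast
qed

lemma rev_lucas_bal_multiple_normalized_iff:
  fixes \<pi> :: "nat \<Rightarrow> real"
  assumes "0 < n"
  shows "rev_lucas_bal_multiple n \<pi> \<and> (\<Sum>i<n. \<pi> i) = 1 \<longleftrightarrow>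
         (\<forall>i<n. \<pi> i = real_of_int (lucas_bal (n - 1 - i)) / (\<Sum>l<n. real_of_int (lucas_bal l)))"
proof -
  define S where "S = (\<Sum>l<n. real_of_int (lucas_bal l))"
  have "S > 0"
    unfolding S_def using assms by (rule lucas_bal_sum_pos)
  have "rev_lucas_bal_multiple n \<pi> \<and> (\<Sum>i<n. \<pi> i) = 1 \<longleftrightarrow>
        (\<forall>i<n. \<pi> i = lucas_bal (n - 1 - i) / S)"
  proof
    assume "rev_lucas_bal_multiple n \<pi> \<and> (\<Sum>i<n. \<pi> i) = 1"
    then obtain x where profile: "\<forall>i<n. \<pi> i = real_of_int (lucas_bal (n - 1 - i)) * x"
      and total: "(\<Sum>i<n. \<pi> i) = 1" unfolding rev_lucas_bal_multiple_def by blast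
    have "S * x = 1"
      using total profile lucas_bal_reversed_sum[of n x] unfolding S_def by simp
    with profile \<open>S > 0\<close> show "\<forall>i<n. \<pi> i = lucas_bal (n - 1 - i) / S"
      by (simp add: field_simps)
  next
    assume normalized: "\<forall>i<n. \<pi> i = lucas_bal (n - 1 - i) / S"
    then have "\<forall>i<n. \<pi> i = real_of_int (lucas_bal (n - 1 - i)) * (1 / S)"
      by simp
    moreover have "(\<Sum>i<n. \<pi> i) = 1"
      using normalized lucas_bal_reversed_sum[of n "1 / S"] \<open>S > 0\<close> unfolding S_def by simp
    ultimately show "rev_lucas_bal_multiple n \<pi> \<and> (\<Sum>i<n. \<pi> i) = 1"
      unfolding rev_lucas_bal_multiple_def by blast
  qed
  then show ?thesis
    unfolding S_def .
qed

theorem theorem3p2: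
  fixes n :: nat and q :: real
  assumes "n \<ge> 3" and "0 < q" and "q \<le> 1/6"
  shows "\<forall>\<pi>. stationary_prob n q \<pi> \<longleftrightarrow>
           (\<forall>i<n. \<pi> i = real_of_int (lucas_bal (n - 1 - i)) / (\<Sum>l<n. real_of_int (lucas_bal l)))"
proof
  fix \<pi> :: "nat \<Rightarrow> real"
  have "q \<noteq> 0" and "0 < n"
    using assms(1,2) by simp_all
  then show "stationary_prob n q \<pi> \<longleftrightarrow>
      (\<forall>i<n. \<pi> i = real_of_int (lucas_bal (n - 1 - i)) / (\<Sum>l<n. real_of_int (lucas_bal l)))"
    using stationary_prob_iff_rev_lucas_bal_multiple[OF assms(1)] rev_lucas_bal_multiple_normalized_iff
    by blast
qed

end
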